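(* For every $\varepsilon\in(0,\tfrac12)$ there is an $n_0=n_0(\varepsilon)$ such that the following holds for all $n>n_0$. Let $G=(A,B;E_G)$ and $H=(S,T;E_H)$ be bipartite graphs with $|A|=|B|=|S|=|T|=n$ satisfying: (1) $d_G(x)>\left(\tfrac12+\varepsilon\right)n$ for all $x\in A\cup B$; (2) $d_H(x)<\dfrac{\varepsilon^4}{100}\cdot\dfrac{n}{\log n}$ for all $x\in S$; (3) $d_H(y)=1$ for all $y\in T$. Then $H\subseteq G$, i.e. $G$ contains a subgraph isomorphic to $H$ via an isomorphism mapping $S$ onto $A$ and $T$ onto $B$.
   Context: All graphs are simple. $d_G(v)$ denotes the degree of vertex $v$ in graph $G$. For a bipartite graph written $G=(A,B;E)$, $A$ and $B$ are its two vertex classes. *)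

theory Defs
  imports Complex_Main
begin

definition bip_graph :: "'a set \<Rightarrow> 'a set \<Rightarrow> ('a \<times> 'a) set \<Rightarrow> bool" where
  "bip_graph A B E \<longleftrightarrow> finite A \<and> finite B \<and> A \<inter> B = {} \<and> E \<subseteq> A \<times> B"

definition degL :: "('a \<times> 'a) set \<Rightarrow> 'a \<Rightarrow> nat" where
  "degL E x = card {y. (x, y) \<in> E}"

definition degR :: "('a \<times> 'a) set \<Rightarrow> 'a \<Rightarrow> nat" where
  "degR E y = card {x. (x, y) \<in> E}"

definition bip_embeds ::
  "'a set \<Rightarrow> 'a set \<Rightarrow> ('a \<times> 'a) set \<Rightarrow> 'a set \<Rightarrow> 'a set \<Rightarrow> ('a \<times> 'a) set \<Rightarrow> bool" where
  "bip_embeds S T EH A B EG \<longleftrightarrow>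
     (\<exists>f g. bij_betw f S A \<and> bij_betw g T B \<and> (\<forall>(s, t) \<in> EH. (f s, g t) \<in> EG))"

end

theory Submission
  imports Defs "HOL-Probability.Hoeffding" "HOL-Probability.Product_PMF"
begin

text \<open>H is a disjoint union of stars: every leaf \<open>t \<in> T\<close> hangs at a centre \<open>c t \<in> S\<close>, and the
  centre \<open>s\<close> carries \<open>d s = d\<^sub>H(s)\<close> leaves. First map the centres bijectively onto \<open>A\<close> so that
  for every \<open>b \<in> B\<close> the centres landing among the non-neighbours of \<open>b\<close> carry at most
  \<open>(1/2 + \<epsilon>) n\<close> leaves in total. Then Hall's condition for placing the leaves holds: a set of
  leaves whose neighbourhood misses some \<open>b\<close> has at most \<open>(1/2 + \<epsilon>) n\<close> elements, while a
  single leaf already sees more than \<open>(1/2 + \<epsilon>) n\<close> vertices of \<open>B\<close>.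

  To find the centre map, list the centres so that every prefix sum of the weights \<open>d\<close> stays
  within \<open>max d + 1\<close> of its length, cut the positions into blocks of length about
  \<open>m = \<epsilon>\<^sup>2 n / (2 ln n)\<close>, and rotate every block by an independent uniform shift. A
  non-neighbourhood has at most \<open>(1/2 - \<epsilon>) n\<close> elements, so it receives expected weight at most
  \<open>n / 2\<close>; Hoeffding's inequality and a union bound over the \<open>n\<close> vertices of \<open>B\<close> show that
  some choice of shifts works.\<close>

section \<open>Hall's marriage theorem\<close>

definition hall_condition :: "'a set \<Rightarrow> ('a \<Rightarrow> 'b set) \<Rightarrow> bool" where
  "hall_condition X R \<longleftrightarrow> (\<forall>Y\<subseteq>X. card Y \<le> card (\<Union>(R ` Y)))"

lemma hall_condition_subset:
  "hall_condition X R \<Longrightarrow> Y \<subseteq> X \<Longrightarrow> hall_condition Y R"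
  unfolding hall_condition_def by blast

lemma hall_condition_delete:
  assumes hall: "hall_condition X R" and x: "x \<in> X"
    and slack: "\<And>Y. Y \<subseteq> X \<Longrightarrow> Y \<noteq> {} \<Longrightarrow> Y \<noteq> X \<Longrightarrow> card Y < card (\<Union>(R ` Y))"
  shows "hall_condition (X - {x}) (\<lambda>z. R z - {y})"
  unfolding hall_condition_def
proof (intro allI impI)
  fix Y assume Y: "Y \<subseteq> X - {x}"
  show "card Y \<le> card (\<Union>z\<in>Y. R z - {y})"
  proof (cases "Y = {}")
    case False
    have less: "card Y < card (\<Union>(R ` Y))"
      using slack[of Y] Y x False by blast
    then have "finite (\<Union>(R ` Y))" by (intro card_ge_0_finite) linarith
    then have "card (\<Union>(R ` Y)) \<le> card (\<Union>(R ` Y) - {y}) + 1"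
      using card_Suc_Diff1[of "\<Union>(R ` Y)" y] by (cases "y \<in> \<Union>(R ` Y)") auto
    moreover have "(\<Union>z\<in>Y. R z - {y}) = \<Union>(R ` Y) - {y}" by blast
    ultimately show ?thesis using less by simp
  qed simp
qed

lemma hall_condition_contract:
  assumes hall: "hall_condition X R" and Y: "Y \<subseteq> X"
    and tight: "card Y = card (\<Union>(R ` Y))" and fin: "finite X"
  shows "hall_condition (X - Y) (\<lambda>z. R z - \<Union>(R ` Y))"
  unfolding hall_condition_def
proof (intro allI impI)
  fix Z assume Z: "Z \<subseteq> X - Y"
  have ZY: "Z \<union> Y \<subseteq> X" using Z Y by blast
  then have "finite Z" "finite Y" using fin by (auto intro: rev_finite_subset)
  then have "card Z + card Y = card (Z \<union> Y)"
    using Z by (intro card_Un_disjoint[symmetric]) auto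
  also have "\<dots> \<le> card (\<Union>(R ` (Z \<union> Y)))"
    using hall ZY unfolding hall_condition_def by blast
  also have "\<Union>(R ` (Z \<union> Y)) = (\<Union>z\<in>Z. R z - \<Union>(R ` Y)) \<union> \<Union>(R ` Y)" by blast
  also have "card \<dots> \<le> card (\<Union>z\<in>Z. R z - \<Union>(R ` Y)) + card (\<Union>(R ` Y))" by (rule card_Un_le)
  finally show "card Z \<le> card (\<Union>z\<in>Z. R z - \<Union>(R ` Y))" using tight by simp
qed

lemma hall_condition_tight_or_slack:
  assumes "hall_condition X R"
  obtains (tight) Y where "Y \<subseteq> X" "Y \<noteq> {}" "Y \<noteq> X" "card Y = card (\<Union>(R ` Y))"
    | (slack) "\<And>Y. Y \<subseteq> X \<Longrightarrow> Y \<noteq> {} \<Longrightarrow> Y \<noteq> X \<Longrightarrow> card Y < card (\<Union>(R ` Y))"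
proof (cases "\<exists>Y\<subseteq>X. Y \<noteq> {} \<and> Y \<noteq> X \<and> card Y = card (\<Union>(R ` Y))")
  case False
  have "card Y < card (\<Union>(R ` Y))" if "Y \<subseteq> X" "Y \<noteq> {}" "Y \<noteq> X" for Y
  proof -
    have "card Y \<le> card (\<Union>(R ` Y))" using assms that(1) unfolding hall_condition_def by blast
    moreover have "card Y \<noteq> card (\<Union>(R ` Y))" using False that by blast
    ultimately show ?thesis by linarith
  qed
  then show ?thesis by (rule slack)
qed (use tight in blast)

lemma inj_on_if_disjoint_images:
  assumes "inj_on f Y" "inj_on g Z" "Y \<inter> Z = {}" "f ` Y \<subseteq> N" "g ` Z \<inter> N = {}"
  shows "inj_on (\<lambda>z. if z \<in> Y then f z else g z) (Y \<union> Z)"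
proof (rule inj_on_Un[THEN iffD2], intro conjI)
  show "inj_on (\<lambda>z. if z \<in> Y then f z else g z) Y" using assms(1) by (simp add: inj_on_def)
  show "inj_on (\<lambda>z. if z \<in> Y then f z else g z) Z" using assms(2,3) by (auto simp: inj_on_def)
  show "(\<lambda>z. if z \<in> Y then f z else g z) ` (Y - Z) \<inter> (\<lambda>z. if z \<in> Y then f z else g z) ` (Z - Y) = {}"
    using assms(3-5) by auto
qed

theorem hall_marriage:
  assumes "finite X" "hall_condition X R"
  shows "\<exists>h. inj_on h X \<and> (\<forall>x\<in>X. h x \<in> R x)"
  using assms
proof (induction "card X" arbitrary: X R rule: less_induct)
  case less
  note fin = less.prems(1) and hall = less.prems(2)
  show ?case
  proof (cases "X = {}")
    case False
    from hall show ?thesis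
    proof (cases rule: hall_condition_tight_or_slack)
      case slack
      obtain x where x: "x \<in> X" using False by blast
      have "card {x} \<le> card (\<Union>(R ` {x}))" using hall x unfolding hall_condition_def by blast
      then obtain y where y: "y \<in> R x" by fastforce
      have "card (X - {x}) < card X" using fin x by (rule card_Diff1_less)
      then obtain h where h: "inj_on h (X - {x})" "\<forall>z\<in>X - {x}. h z \<in> R z - {y}"
        using less.hyps[OF _ finite_Diff[OF fin] hall_condition_delete[OF hall x slack]] by blast
      have "inj_on (h(x := y)) X" using h x by (auto simp: inj_on_def)
      then show ?thesis using h y by (intro exI[of _ "h(x := y)"]) auto
    next
      case (tight Y)
      have finY: "finite Y" using tight(1) fin by (rule finite_subset)
      have "card Y < card X" using tight fin by (meson psubsetI psubset_card_mono)
      then obtain h1 where h1: "inj_on h1 Y" "\<forall>z\<in>Y. h1 z \<in> R z"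
        using less.hyps[OF _ finY hall_condition_subset[OF hall tight(1)]] by blast
      have "0 < card Y" using finY tight(2) by auto
      then have "card (X - Y) < card X"
        using \<open>card Y < card X\<close> card_Diff_subset[OF finY tight(1)] by linarith
      then obtain h2 where h2: "inj_on h2 (X - Y)" "\<forall>z\<in>X - Y. h2 z \<in> R z - \<Union>(R ` Y)"
        using less.hyps[OF _ finite_Diff[OF fin] hall_condition_contract[OF hall tight(1,4) fin]]
        by blast
      have "inj_on (\<lambda>z. if z \<in> Y then h1 z else h2 z) (Y \<union> (X - Y))"
        using h1 h2 by (intro inj_on_if_disjoint_images[where N = "\<Union>(R ` Y)"]) auto
      moreover have "Y \<union> (X - Y) = X" using tight(1) by blast
      ultimately show ?thesis using h1(2) h2(2) by (intro exI[of _ "\<lambda>z. if z \<in> Y then h1 z else h2 z"]) auto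
    qed
  qed simp
qed

text \<open>If the sets \<open>R t\<close> for \<open>t \<in> Y\<close> all miss some \<open>b\<close>, then \<open>|Y| \<le> W\<close>, while a single \<open>R t\<close>
  already has more than \<open>W\<close> elements.\<close>

lemma hall_condition_if_spread:
  fixes W :: real
  assumes T: "finite T" "card T = card B" and B: "finite B" "\<forall>t\<in>T. R t \<subseteq> B"
    and large: "\<forall>t\<in>T. W < real (card (R t))"
    and spread: "\<forall>b\<in>B. real (card {t\<in>T. b \<notin> R t}) \<le> W"
  shows "hall_condition T R"
  unfolding hall_condition_def
proof (intro allI impI)
  fix Y assume Y: "Y \<subseteq> T"
  have NY: "\<Union>(R ` Y) \<subseteq> B" using Y B(2) by blast
  show "card Y \<le> card (\<Union>(R ` Y))"
  proof (cases "\<Union>(R ` Y) = B \<or> Y = {}")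
    case True
    then show ?thesis using card_mono[OF T(1) Y] T(2) by auto
  next
    case False
    then obtain b t0 where b: "b \<in> B" "b \<notin> \<Union>(R ` Y)" and t0: "t0 \<in> Y" using NY by blast
    have "Y \<subseteq> {t\<in>T. b \<notin> R t}" using Y b by blast
    then have "card Y \<le> card {t\<in>T. b \<notin> R t}" using T(1) by (intro card_mono) auto
    then have "real (card Y) \<le> W" using spread b(1) by (meson of_nat_le_iff order_trans)
    also have "W < real (card (R t0))" using large t0 Y by blast
    also have "card (R t0) \<le> card (\<Union>(R ` Y))"
      using t0 NY B(1) by (intro card_mono) (auto intro: finite_subset)
    finally show ?thesis by simp
  qed
qed

section \<open>Balanced orderings\<close>

lemma exists_step_within_window:
  fixes e :: "'a \<Rightarrow> nat" and off :: int
  assumes fin: "finite X" and ne: "X \<noteq> {}" and bound: "\<forall>x\<in>X. e x \<le> D"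
    and window: "-1 \<le> off" "off \<le> int D"
    and balanced: "off + (\<Sum>x\<in>X. int (e x) - 1) = 0"
  obtains x where "x \<in> X" "-1 \<le> off + int (e x) - 1" "off + int (e x) - 1 \<le> int D"
proof (cases "off \<ge> 0")
  case True
  have "\<exists>x\<in>X. e x \<le> 1"
  proof (rule ccontr)
    assume "\<not> (\<exists>x\<in>X. e x \<le> 1)"
    then have "(\<Sum>x\<in>X. 1) \<le> (\<Sum>x\<in>X. int (e x) - 1)" by (intro sum_mono) auto
    moreover have "0 < (\<Sum>x\<in>X. 1::int)" using fin ne by (simp add: card_gt_0_iff)
    ultimately show False using balanced True by linarith
  qed
  then show ?thesis using that True window(2) by force
next
  case False
  then have off: "off = -1" using window(1) by linarith
  have "\<exists>x\<in>X. 2 \<le> e x"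
  proof (rule ccontr)
    assume "\<not> (\<exists>x\<in>X. 2 \<le> e x)"
    then have "(\<Sum>x\<in>X. int (e x) - 1) \<le> 0" by (intro sum_nonpos) auto
    then show False using balanced off by linarith
  qed
  then show ?thesis using that off bound by force
qed

lemma balanced_ordering:
  fixes e :: "'a \<Rightarrow> nat" and off :: int
  assumes "finite X" "\<forall>x\<in>X. e x \<le> D" "-1 \<le> off" "off \<le> int D"
    and "off + (\<Sum>x\<in>X. int (e x) - 1) = 0"
  shows "\<exists>xs. distinct xs \<and> set xs = X \<and>
    (\<forall>k\<le>length xs. -1 \<le> off + (\<Sum>i<k. int (e (xs!i)) - 1)
                    \<and> off + (\<Sum>i<k. int (e (xs!i)) - 1) \<le> int D)"
  using assms
proof (induction "card X" arbitrary: X off rule: less_induct)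
  case less
  show ?case
  proof (cases "X = {}")
    case True
    then show ?thesis using less.prems by (intro exI[of _ "[]"]) auto
  next
    case False
    then obtain x where x: "x \<in> X" "-1 \<le> off + int (e x) - 1" "off + int (e x) - 1 \<le> int D"
      using exists_step_within_window less.prems by metis
    define off' where "off' = off + int (e x) - 1"
    have "off' + (\<Sum>y\<in>X - {x}. int (e y) - 1) = 0"
      using less.prems(1,5) x(1) by (simp add: off'_def sum.remove)
    moreover have "card (X - {x}) < card X" using less.prems(1) x(1) by (rule card_Diff1_less)
    ultimately obtain xs where xs: "distinct xs" "set xs = X - {x}"
      "\<forall>k\<le>length xs. -1 \<le> off' + (\<Sum>i<k. int (e (xs!i)) - 1)
                      \<and> off' + (\<Sum>i<k. int (e (xs!i)) - 1) \<le> int D"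
      using less.hyps[of "X - {x}" off'] less.prems x by (auto simp: off'_def)
    have shift: "off + (\<Sum>i<Suc k. int (e ((x#xs)!i)) - 1) = off' + (\<Sum>i<k. int (e (xs!i)) - 1)"
      for k by (subst sum.lessThan_Suc_shift) (simp add: off'_def)
    have "\<forall>k\<le>length (x#xs). -1 \<le> off + (\<Sum>i<k. int (e ((x#xs)!i)) - 1)
                             \<and> off + (\<Sum>i<k. int (e ((x#xs)!i)) - 1) \<le> int D"
    proof (intro allI impI)
      fix k assume "k \<le> length (x#xs)"
      then show "-1 \<le> off + (\<Sum>i<k. int (e ((x#xs)!i)) - 1)
                 \<and> off + (\<Sum>i<k. int (e ((x#xs)!i)) - 1) \<le> int D"
        using less.prems(3,4) xs(3) shift by (cases k) auto
    qed
    moreover have "distinct (x#xs)" "set (x#xs) = X" using xs x(1) by auto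
    ultimately show ?thesis by blast
  qed
qed

lemma exists_balanced_enumeration:
  fixes d :: "'a \<Rightarrow> nat"
  assumes S: "finite S" "card S = n" "sum d S = n" and D: "\<forall>s\<in>S. d s \<le> D"
  obtains xs where "distinct xs" "set xs = S" "length xs = n"
    "\<forall>k\<le>n. \<bar>real (\<Sum>i<k. d (xs ! i)) - real k\<bar> \<le> real D + 1"
proof -
  have "0 + (\<Sum>s\<in>S. int (d s) - 1) = 0"
    using S by (simp add: sum_subtractf flip: of_nat_sum)
  then obtain xs where xs: "distinct xs" "set xs = S"
    "\<forall>k\<le>length xs. -1 \<le> 0 + (\<Sum>i<k. int (d (xs!i)) - 1) \<and> 0 + (\<Sum>i<k. int (d (xs!i)) - 1) \<le> int D"
    using balanced_ordering[of S d D 0] S(1) D by auto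
  have len: "length xs = n" using xs S(2) distinct_card by fastforce
  have "\<bar>real (\<Sum>i<k. d (xs ! i)) - real k\<bar> \<le> real D + 1" if "k \<le> n" for k
  proof -
    have "(\<Sum>i<k. int (d (xs!i)) - 1) = int (\<Sum>i<k. d (xs ! i)) - int k"
      by (simp add: sum_subtractf of_nat_sum)
    then have "-1 \<le> int (\<Sum>i<k. d (xs ! i)) - int k" "int (\<Sum>i<k. d (xs ! i)) - int k \<le> int D"
      using xs(3) that len by auto
    then show ?thesis by linarith
  qed
  then show ?thesis using that xs len by blast
qed

section \<open>Block rotations\<close>

lemma add_mod_cancel_less:
  fixes a b K s :: nat
  assumes "a < s" "b < s" "(a + K) mod s = (b + K) mod s"
  shows "a = b"
proof -
  have "x = y" if xy: "x \<le> y" "y < s" "(x + K) mod s = (y + K) mod s" for x y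
  proof -
    obtain c where "y + K = x + K + s * c"
      using mod_eq_nat1E[OF xy(3)[symmetric]] xy(1) by auto
    then show ?thesis using xy(1,2) by (cases c) auto
  qed
  then show ?thesis using assms by (metis nat_le_linear)
qed

lemma sum_consecutive_intervals:
  fixes g :: "nat \<Rightarrow> nat"
  assumes "\<forall>t<q. g t \<le> g (Suc t)"
  shows "(\<Sum>t<q. sum h {g t..<g (Suc t)}) = sum h {g 0..<g q} \<and> g 0 \<le> g q"
  using assms
proof (induction q)
  case (Suc q)
  then have IH: "(\<Sum>t<q. sum h {g t..<g (Suc t)}) = sum h {g 0..<g q}" "g 0 \<le> g q" by auto
  have "g q \<le> g (Suc q)" using Suc.prems by auto
  then show ?case using IH by (simp add: sum.atLeastLessThan_concat)
qed simp

text \<open>The positions \<open>{..<n}\<close> are cut into \<open>n div m\<close> consecutive blocks \<open>[t * m, (t + 1) * m)\<close>,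
  the last block being extended up to \<open>n\<close>; \<open>block_rotation n m k\<close> rotates block \<open>t\<close>
  cyclically by \<open>k t\<close>.\<close>

definition block_start :: "nat \<Rightarrow> nat \<Rightarrow> nat \<Rightarrow> nat" where
  "block_start n m t = (if t < n div m then t * m else n)"

definition block_of :: "nat \<Rightarrow> nat \<Rightarrow> nat \<Rightarrow> nat" where
  "block_of n m i = min (i div m) (n div m - 1)"

definition block_size :: "nat \<Rightarrow> nat \<Rightarrow> nat \<Rightarrow> nat" where
  "block_size n m t = block_start n m (Suc t) - block_start n m t"

definition block_rotation :: "nat \<Rightarrow> nat \<Rightarrow> (nat \<Rightarrow> nat) \<Rightarrow> nat \<Rightarrow> nat" where
  "block_rotation n m k i = block_start n m (block_of n m i)
     + (i - block_start n m (block_of n m i) + k (block_of n m i)) mod block_size n m (block_of n m i)"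

context
  fixes n m :: nat
  assumes m_pos: "1 \<le> m" and m_le: "m \<le> n"
begin

lemma block_count_pos: "1 \<le> n div m"
  using m_pos m_le by (metis div_le_mono div_self not_one_le_zero)

lemma block_start_0: "block_start n m 0 = 0"
  using block_count_pos by (simp add: block_start_def)

lemma block_start_last: "block_start n m (n div m) = n"
  by (simp add: block_start_def)

lemma block_start_Suc:
  assumes t: "t < n div m"
  shows "block_start n m t + m \<le> block_start n m (Suc t)"
    and "block_start n m (Suc t) < block_start n m t + 2 * m"
proof -
  have n: "(n div m) * m \<le> n" "n < (n div m) * m + m"
    using m_pos mod_less_divisor[of m n] div_mult_mod_eq[of n m] by linarith+
  have start: "block_start n m t = t * m" using t by (simp add: block_start_def)
  have "block_start n m t + m \<le> block_start n m (Suc t)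
    \<and> block_start n m (Suc t) < block_start n m t + 2 * m"
  proof (cases "Suc t < n div m")
    case True
    then show ?thesis using start m_pos by (simp add: block_start_def)
  next
    case False
    then have "n div m = Suc t" using t by simp
    then show ?thesis using start n m_pos by (simp add: block_start_def)
  qed
  then show "block_start n m t + m \<le> block_start n m (Suc t)"
    and "block_start n m (Suc t) < block_start n m t + 2 * m" by auto
qed

lemma block_start_mono: "t < n div m \<Longrightarrow> block_start n m t \<le> block_start n m (Suc t)"
  using block_start_Suc(1) by fastforce

lemma block_start_le: "block_start n m t \<le> n"
proof (cases "t < n div m")
  case True
  then have "t * m \<le> (n div m) * m" by simp
  also have "\<dots> \<le> n" by (simp add: div_times_less_eq_dividend)
  finally show ?thesis using True by (simp add: block_start_def)
qed (simp add: block_start_def)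

lemma block_size_bounds: "t < n div m \<Longrightarrow> m \<le> block_size n m t \<and> block_size n m t < 2 * m"
  using block_start_Suc[of t] unfolding block_size_def by linarith

lemma block_of_eqI:
  assumes t: "t < n div m" and i: "block_start n m t \<le> i" "i < block_start n m (Suc t)"
  shows "block_of n m i = t"
proof (cases "Suc t < n div m")
  case True
  then have "i div m = t"
    using t i by (simp add: block_start_def div_nat_eqI mult.commute)
  then show ?thesis using True by (simp add: block_of_def)
next
  case False
  then have "n div m - 1 = t" using t by simp
  moreover have "t \<le> i div m"
    using t i m_pos by (simp add: block_start_def less_eq_div_iff_mult_less_eq)
  ultimately show ?thesis by (simp add: block_of_def)
qed

lemma block_of_bounds:
  assumes "i < n"
  shows "block_of n m i < n div m \<and> block_start n m (block_of n m i) \<le> i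
    \<and> i < block_start n m (Suc (block_of n m i))"
proof -
  have q1: "1 \<le> n div m" by (rule block_count_pos)
  have dm: "(i div m) * m \<le> i" "i < (i div m) * m + m"
    using m_pos by (simp_all add: div_times_less_eq_dividend add.commute dividend_less_div_times)
  show ?thesis
  proof (cases "i div m \<le> n div m - 1")
    case True
    then have lt: "i div m < n div m" using q1 by linarith
    then have "block_start n m (i div m) = (i div m) * m" by (simp add: block_start_def)
    then show ?thesis using True lt dm block_start_Suc(1)[OF lt] by (simp add: block_of_def)
  next
    case False
    then have "(n div m - 1) * m \<le> (i div m) * m" by simp
    then have "(n div m - 1) * m \<le> i" using dm by linarith
    moreover have "block_start n m (n div m - 1) = (n div m - 1) * m"
      using q1 by (simp add: block_start_def)
    moreover have "Suc (n div m - 1) = n div m" using q1 by simp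
    ultimately show ?thesis using False assms q1 block_start_last by (auto simp: block_of_def)
  qed
qed

lemma block_rotation_in_block:
  assumes "t < n div m"
  shows "block_start n m t + x mod block_size n m t < block_start n m (Suc t)"
proof -
  have "0 < block_size n m t" using block_size_bounds[OF assms] m_pos by linarith
  then have "x mod block_size n m t < block_size n m t" by simp
  then show ?thesis using block_start_mono[OF assms] by (simp add: block_size_def)
qed

lemma block_rotation_eq:
  "t < n div m \<Longrightarrow> block_start n m t \<le> i \<Longrightarrow> i < block_start n m (Suc t) \<Longrightarrow>
    block_rotation n m k i = block_start n m t + (i - block_start n m t + k t) mod block_size n m t"
  using block_of_eqI by (simp add: block_rotation_def)

lemma block_of_block_rotation:
  assumes "i < n"
  shows "block_of n m (block_rotation n m k i) = block_of n m i"
proof -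
  obtain t where t: "block_of n m i = t" by simp
  then have "t < n div m" using block_of_bounds[OF assms] by simp
  then have "block_of n m (block_start n m t + x mod block_size n m t) = t" for x
    using block_rotation_in_block block_of_eqI le_add1 by blast
  then show ?thesis by (simp add: block_rotation_def t)
qed

lemma bij_betw_block_rotation: "bij_betw (block_rotation n m k) {..<n} {..<n}"
proof -
  have maps: "block_rotation n m k i < n" if "i < n" for i
  proof -
    have "block_of n m i < n div m" using block_of_bounds[OF that] by blast
    then have "block_rotation n m k i < block_start n m (Suc (block_of n m i))"
      using block_rotation_in_block by (simp add: block_rotation_def)
    then show ?thesis using block_start_le[of "Suc (block_of n m i)"] by linarith
  qed
  have "inj_on (block_rotation n m k) {..<n}"
  proof (rule inj_onI)
    fix i j assume "i \<in> {..<n}" "j \<in> {..<n}" and eq: "block_rotation n m k i = block_rotation n m k j"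
    then have i: "block_of n m i < n div m" "block_start n m (block_of n m i) \<le> i"
        "i < block_start n m (Suc (block_of n m i))"
      and j: "block_of n m j < n div m" "block_start n m (block_of n m j) \<le> j"
        "j < block_start n m (Suc (block_of n m j))"
      using block_of_bounds by auto
    have same: "block_of n m i = block_of n m j"
      using block_of_block_rotation \<open>i \<in> {..<n}\<close> \<open>j \<in> {..<n}\<close> eq by (metis lessThan_iff)
    define t where "t = block_of n m i"
    have "(i - block_start n m t + k t) mod block_size n m t = (j - block_start n m t + k t) mod block_size n m t"
      using eq same by (simp add: block_rotation_def t_def)
    moreover have "i - block_start n m t < block_size n m t" "j - block_start n m t < block_size n m t"
      using i j same by (auto simp: block_size_def t_def)
    ultimately have "i - block_start n m t = j - block_start n m t" using add_mod_cancel_less by blast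
    then show "i = j" using i(2) j(2) same by (simp add: t_def)
  qed
  moreover from this have "block_rotation n m k ` {..<n} = {..<n}"
    using maps by (intro endo_inj_surj) auto
  ultimately show ?thesis by (simp add: bij_betw_def)
qed

lemma sum_lessThan_blocks:
  "(\<Sum>i<n. h i) = (\<Sum>t<n div m. \<Sum>i\<in>{block_start n m t..<block_start n m (Suc t)}. h i)"
  using sum_consecutive_intervals[of "n div m" "block_start n m" h] block_start_mono
  by (simp add: block_start_0 block_start_last lessThan_atLeast0)

end

section \<open>Random block rotations\<close>

locale near_uniform_weights =
  fixes n m :: nat and w :: "nat \<Rightarrow> nat" and \<Delta> \<epsilon> :: real
  assumes m_pos: "1 \<le> m" and m_le: "m \<le> n"
    and eps_pos: "0 < \<epsilon>" and eps_less: "\<epsilon> < 1/2"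
    and \<Delta>_nonneg: "0 \<le> \<Delta>" and \<Delta>_le: "\<Delta> \<le> \<epsilon> * m"
    and prefix_close: "\<forall>k\<le>n. \<bar>real (\<Sum>i<k. w i) - real k\<bar> \<le> \<Delta>"
    and total: "(\<Sum>i<n. w i) = n"
begin

abbreviation bstart :: "nat \<Rightarrow> nat" where "bstart \<equiv> block_start n m"
abbreviation bsize :: "nat \<Rightarrow> nat" where "bsize \<equiv> block_size n m"
abbreviation block :: "nat \<Rightarrow> nat set" where "block t \<equiv> {bstart t..<bstart (Suc t)}"

definition block_weight :: "nat \<Rightarrow> real" where
  "block_weight t = (\<Sum>i\<in>block t. real (w i))"

definition rotated_weight :: "(nat \<Rightarrow> nat) \<Rightarrow> nat set \<Rightarrow> real" where
  "rotated_weight k U = (\<Sum>i<n. if block_rotation n m k i \<in> U then real (w i) else 0)"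

definition block_contribution :: "nat set \<Rightarrow> nat \<Rightarrow> nat \<Rightarrow> real" where
  "block_contribution U t a =
     (\<Sum>i\<in>block t. if bstart t + (i - bstart t + a) mod bsize t \<in> U then real (w i) else 0)"

definition random_shifts :: "(nat \<Rightarrow> nat) pmf" where
  "random_shifts = Pi_pmf {..<n div m} 0 (\<lambda>t. pmf_of_set {..<bsize t})"

lemma rotated_weight_blocks: "rotated_weight k U = (\<Sum>t<n div m. block_contribution U t (k t))"
  unfolding rotated_weight_def block_contribution_def sum_lessThan_blocks[OF m_pos m_le]
  by (intro sum.cong refl) (simp add: block_rotation_eq[OF m_pos m_le])

lemma block_weight_le:
  assumes t: "t < n div m"
  shows "block_weight t \<le> bsize t + 2 * \<Delta>"
proof -
  let ?P = "\<lambda>s. real (\<Sum>i<bstart s. w i)"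
  have mono: "bstart t \<le> bstart (Suc t)" using block_start_mono[OF m_pos m_le t] .
  have "(\<Sum>i<bstart (Suc t). w i) = (\<Sum>i<bstart t. w i) + (\<Sum>i\<in>block t. w i)"
    using mono by (simp add: lessThan_atLeast0 sum.atLeastLessThan_concat)
  then have weight: "block_weight t = ?P (Suc t) - ?P t" by (simp add: block_weight_def)
  have close: "\<bar>?P s - real (bstart s)\<bar> \<le> \<Delta>" for s
    using prefix_close block_start_le[OF m_pos m_le] by blast
  have "real (bsize t) = real (bstart (Suc t)) - real (bstart t)"
    using mono by (simp add: block_size_def)
  then show ?thesis
    using weight close[of "Suc t"] close[of t] by (simp only: abs_le_iff) linarith
qed

lemma block_weight_le_3m:
  assumes t: "t < n div m"
  shows "block_weight t \<le> 3 * real m"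
proof -
  have "real (bsize t) < 2 * m" using block_size_bounds[OF m_pos m_le t] by linarith
  moreover have "\<epsilon> * m \<le> 1/2 * m" using eps_less by (intro mult_right_mono) auto
  ultimately show ?thesis using block_weight_le[OF t] \<Delta>_le by linarith
qed

lemma block_weight_nonneg: "0 \<le> block_weight t"
  by (simp add: block_weight_def sum_nonneg)

lemma sum_block_weight: "(\<Sum>t<n div m. block_weight t) = n"
  using sum_lessThan_blocks[OF m_pos m_le, of "\<lambda>i. real (w i)"] total
  unfolding block_weight_def by (metis of_nat_sum)

lemma sum_block_weight_squares:
  "0 < (\<Sum>t<n div m. (block_weight t)\<^sup>2)" "(\<Sum>t<n div m. (block_weight t)\<^sup>2) \<le> 3 * real m * real n"
proof -
  have "(\<Sum>t<n div m. (block_weight t)\<^sup>2) \<le> (\<Sum>t<n div m. 3 * real m * block_weight t)"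
    using block_weight_le_3m block_weight_nonneg
    by (intro sum_mono) (simp add: power2_eq_square mult_right_mono)
  also have "\<dots> = 3 * real m * real n" by (simp add: sum_distrib_left[symmetric] sum_block_weight)
  finally show "(\<Sum>t<n div m. (block_weight t)\<^sup>2) \<le> 3 * real m * real n" .
  have "\<exists>t\<in>{..<n div m}. block_weight t \<noteq> 0"
  proof (rule ccontr)
    assume "\<not> ?thesis"
    then have "(\<Sum>t<n div m. block_weight t) = 0" by simp
    then show False using sum_block_weight m_pos m_le by simp
  qed
  then show "0 < (\<Sum>t<n div m. (block_weight t)\<^sup>2)"
    by (metis finite_lessThan sum_pos2 zero_le_power2 zero_less_power2)
qed

lemma block_contribution_bounds: "0 \<le> block_contribution U t a \<and> block_contribution U t a \<le> block_weight t"
  unfolding block_contribution_def block_weight_def by (auto intro!: sum_nonneg sum_mono)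

text \<open>Each position of block \<open>t\<close> is moved to every slot of the block by exactly one shift.\<close>

lemma sum_block_contribution_le:
  assumes t: "t < n div m"
  shows "(\<Sum>a<bsize t. block_contribution U t a) \<le> block_weight t * card (U \<inter> block t)"
proof -
  let ?pos = "\<lambda>i a. bstart t + (i - bstart t + a) mod bsize t"
  have "(\<Sum>a<bsize t. block_contribution U t a)
      = (\<Sum>i\<in>block t. card {a\<in>{..<bsize t}. ?pos i a \<in> U} * real (w i))"
    unfolding block_contribution_def by (subst sum.swap) (simp add: sum.If_cases Int_def conj_commute)
  also have "\<dots> \<le> (\<Sum>i\<in>block t. card (U \<inter> block t) * real (w i))"
  proof (intro sum_mono mult_right_mono)
    fix i
    have "inj_on (?pos i) {..<bsize t}"
    proof (rule inj_onI)
      fix a b assume "a \<in> {..<bsize t}" "b \<in> {..<bsize t}" "?pos i a = ?pos i b"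
      then show "a = b" using add_mod_cancel_less[of a "bsize t" b "i - bstart t"] by (simp add: add.commute)
    qed
    moreover have "?pos i ` {a\<in>{..<bsize t}. ?pos i a \<in> U} \<subseteq> U \<inter> block t"
      using block_rotation_in_block[OF m_pos m_le t] by auto
    ultimately show "real (card {a\<in>{..<bsize t}. ?pos i a \<in> U}) \<le> real (card (U \<inter> block t))"
      by (intro of_nat_mono card_inj_on_le) (auto intro: inj_on_subset)
  qed simp
  also have "\<dots> = block_weight t * card (U \<inter> block t)"
    by (simp add: block_weight_def sum_distrib_left mult.commute)
  finally show ?thesis .
qed

lemma expectation_block_contribution:
  assumes t: "t < n div m"
  shows "measure_pmf.expectation random_shifts (\<lambda>k. block_contribution U t (k t))
           \<le> (1 + 2 * \<epsilon>) * card (U \<inter> block t)"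
proof -
  let ?K = "real (card (U \<inter> block t))"
  have size: "m \<le> bsize t" using block_size_bounds[OF m_pos m_le t] by simp
  then have size_pos: "0 < real (bsize t)" using m_pos by linarith
  have "(\<Sum>a<bsize t. block_contribution U t a) \<le> block_weight t * ?K"
    by (rule sum_block_contribution_le[OF t])
  also have "\<dots> \<le> (bsize t + 2 * \<Delta>) * ?K"
    by (intro mult_right_mono block_weight_le[OF t]) simp
  finally have sum_le: "(\<Sum>a<bsize t. block_contribution U t a) \<le> (bsize t + 2 * \<Delta>) * ?K" .
  have shift: "map_pmf (\<lambda>k. k t) random_shifts = pmf_of_set {..<bsize t}"
    using t by (simp add: random_shifts_def Pi_pmf_component)
  have "measure_pmf.expectation random_shifts (\<lambda>k. block_contribution U t (k t))
      = measure_pmf.expectation (map_pmf (\<lambda>k. k t) random_shifts) (block_contribution U t)"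
    by simp
  also have "\<dots> = (\<Sum>a<bsize t. block_contribution U t a) / bsize t"
    unfolding shift using size_pos by (subst integral_pmf_of_set) auto
  also have "\<dots> \<le> (bsize t + 2 * \<Delta>) * ?K / bsize t"
    using sum_le by (rule divide_right_mono) simp
  also have "\<dots> = ?K + 2 * \<Delta> * ?K / bsize t" using size_pos by (simp add: field_simps)
  also have "2 * \<Delta> * ?K / bsize t \<le> 2 * \<Delta> * ?K / m"
    using size m_pos \<Delta>_nonneg by (intro divide_left_mono) auto
  also have "2 * \<Delta> * ?K / m \<le> 2 * (\<epsilon> * m) * ?K / m"
    using \<Delta>_le by (intro divide_right_mono mult_right_mono) auto
  also have "?K + 2 * (\<epsilon> * m) * ?K / m = (1 + 2 * \<epsilon>) * ?K" using m_pos by (simp add: field_simps)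
  finally show ?thesis by simp
qed

lemma sum_card_Int_blocks:
  assumes "U \<subseteq> {..<n}"
  shows "(\<Sum>t<n div m. card (U \<inter> block t)) = card U"
proof -
  have "card U = (\<Sum>i<n. if i \<in> U then 1 else 0 :: nat)"
    using assms by (simp add: sum.If_cases Int_absorb1)
  also have "\<dots> = (\<Sum>t<n div m. card (U \<inter> block t))"
    unfolding sum_lessThan_blocks[OF m_pos m_le] by (simp add: sum.If_cases Int_commute)
  finally show ?thesis by simp
qed

lemma sum_expectation_block_contribution_le:
  assumes U: "U \<subseteq> {..<n}" "real (card U) \<le> (1/2 - \<epsilon>) * n"
  shows "(\<Sum>t<n div m. measure_pmf.expectation random_shifts (\<lambda>k. block_contribution U t (k t)))
           \<le> n / 2"
proof -
  have "(\<Sum>t<n div m. measure_pmf.expectation random_shifts (\<lambda>k. block_contribution U t (k t)))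
      \<le> (\<Sum>t<n div m. (1 + 2 * \<epsilon>) * card (U \<inter> block t))"
    by (intro sum_mono expectation_block_contribution) simp
  also have "\<dots> = (1 + 2 * \<epsilon>) * card U"
    by (simp add: sum_distrib_left[symmetric] sum_card_Int_blocks[OF U(1)] flip: of_nat_sum)
  also have "\<dots> \<le> (1 + 2 * \<epsilon>) * ((1/2 - \<epsilon>) * n)"
    using U(2) eps_pos by (intro mult_left_mono) auto
  also have "\<dots> = n / 2 - 2 * \<epsilon>^2 * n" by (simp add: algebra_simps power2_eq_square)
  also have "\<dots> \<le> n / 2" by simp
  finally show ?thesis .
qed

lemma prob_rotated_weight_large:
  assumes U: "U \<subseteq> {..<n}" "real (card U) \<le> (1/2 - \<epsilon>) * n"
  shows "measure_pmf.prob random_shifts {k. (1/2 + \<epsilon>) * n < rotated_weight k U}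
           \<le> exp (-2 * \<epsilon>^2 * n / (3 * real m))"
proof -
  define X where "X t = (\<lambda>k. block_contribution U t (k t))" for t
  have indep: "prob_space.indep_vars (measure_pmf random_shifts) (\<lambda>_. borel) X {..<n div m}"
    unfolding X_def random_shifts_def
    by (intro prob_space.indep_vars_compose2[OF _ indep_vars_Pi_pmf])
      (auto simp: measure_pmf.prob_space_axioms)
  have hoeffding: "Hoeffding_ineq (measure_pmf random_shifts) {..<n div m} X (\<lambda>_. 0) block_weight"
    unfolding Hoeffding_ineq_def indep_interval_bounded_random_variables_def
      indep_interval_bounded_random_variables_axioms_def
    using measure_pmf.prob_space_axioms indep block_contribution_bounds by (auto simp: X_def)
  have mean: "(\<Sum>t<n div m. measure_pmf.expectation random_shifts (X t)) \<le> n / 2"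
    using sum_expectation_block_contribution_le[OF U] by (simp add: X_def)
  have "{k. (1/2 + \<epsilon>) * n < rotated_weight k U}
      \<subseteq> {k \<in> space random_shifts. (\<Sum>t<n div m. measure_pmf.expectation random_shifts (X t)) + \<epsilon> * n
                                 \<le> (\<Sum>t<n div m. X t k)}"
    using mean by (auto simp: rotated_weight_blocks X_def algebra_simps)
  then have "measure_pmf.prob random_shifts {k. (1/2 + \<epsilon>) * n < rotated_weight k U}
      \<le> measure_pmf.prob random_shifts {k \<in> space random_shifts.
            (\<Sum>t<n div m. measure_pmf.expectation random_shifts (X t)) + \<epsilon> * n \<le> (\<Sum>t<n div m. X t k)}"
    by (intro measure_pmf.finite_measure_mono) auto
  also have "\<dots> \<le> exp (-2 * (\<epsilon> * n)\<^sup>2 / (\<Sum>t<n div m. (block_weight t - 0)\<^sup>2))"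
    using Hoeffding_ineq.Hoeffding_ineq_ge[OF hoeffding, of "\<epsilon> * n"] sum_block_weight_squares(1) eps_pos
    by simp
  also have "\<dots> \<le> exp (-2 * (\<epsilon> * n)\<^sup>2 / (3 * real m * real n))"
    using sum_block_weight_squares by (simp add: frac_le)
  also have "-2 * (\<epsilon> * n)\<^sup>2 / (3 * real m * real n) = -2 * \<epsilon>^2 * n / (3 * real m)"
    using m_pos m_le by (simp add: power2_eq_square field_simps)
  finally show ?thesis .
qed

lemma exists_light_rotation:
  assumes F: "finite F" "card F \<le> n" "\<forall>U\<in>F. U \<subseteq> {..<n} \<and> real (card U) \<le> (1/2 - \<epsilon>) * n"
    and small: "real n * exp (-2 * \<epsilon>^2 * n / (3 * real m)) < 1"
  shows "\<exists>k. \<forall>U\<in>F. rotated_weight k U \<le> (1/2 + \<epsilon>) * n"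
proof -
  let ?bad = "\<lambda>U. {k. (1/2 + \<epsilon>) * n < rotated_weight k U}"
  have "measure_pmf.prob random_shifts (\<Union>U\<in>F. ?bad U) \<le> (\<Sum>U\<in>F. measure_pmf.prob random_shifts (?bad U))"
    using F(1) by (intro measure_pmf.finite_measure_subadditive_finite) auto
  also have "\<dots> \<le> (\<Sum>U\<in>F. exp (-2 * \<epsilon>^2 * n / (3 * real m)))"
    using F(3) by (intro sum_mono prob_rotated_weight_large) auto
  also have "\<dots> \<le> n * exp (-2 * \<epsilon>^2 * n / (3 * real m))"
    using F(2) by (simp add: mult_right_mono)
  finally have "(\<Union>U\<in>F. ?bad U) \<noteq> UNIV"
    using small measure_pmf.prob_space by auto
  then obtain k where "k \<notin> (\<Union>U\<in>F. ?bad U)" by blast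
  then show ?thesis by (auto simp: not_less)
qed

end

section \<open>Choice of the block length\<close>

lemma ln_less_two_sqrt:
  fixes x :: real
  assumes "0 < x"
  shows "ln x < 2 * sqrt x"
proof -
  have "ln x = 2 * ln (sqrt x)" using assms by (simp add: ln_sqrt)
  also have "\<dots> < 2 * sqrt x" using assms by (simp add: ln_less_self)
  finally show ?thesis .
qed

lemma eps_cube_n_over_ln_threshold:
  fixes \<epsilon> :: real
  assumes eps: "0 < \<epsilon>"
  shows "\<exists>N::nat. \<forall>n>N. 2 \<le> n \<and> 4 \<le> \<epsilon>^3 * real n / ln (real n)"
proof (intro exI allI impI)
  fix n :: nat assume n: "nat \<lceil>64 / \<epsilon>^6\<rceil> + 2 < n"
  then have n2: "2 \<le> n" by simp
  have "64 / \<epsilon>^6 \<le> real n" using n by linarith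
  then have "8^2 \<le> (\<epsilon>^3 * sqrt n)^2"
    using eps by (simp add: divide_le_eq power_mult_distrib mult.commute flip: power_mult)
  then have "8 \<le> \<epsilon>^3 * sqrt n" by (rule power2_le_imp_le) (use eps in simp)
  moreover have "\<epsilon>^3 * n / (2 * sqrt n) \<le> \<epsilon>^3 * n / ln n"
    using ln_less_two_sqrt[of n] n2 eps by (intro divide_left_mono) auto
  moreover have "\<epsilon>^3 * n / (2 * sqrt n) = \<epsilon>^3 * sqrt n / 2"
    using n2 by (simp add: field_simps real_sqrt_mult_self flip: real_sqrt_mult)
  ultimately show "2 \<le> n \<and> 4 \<le> \<epsilon>^3 * real n / ln (real n)" using n2 by linarith
qed

text \<open>The block length \<open>m\<close> is \<open>\<lfloor>\<epsilon>\<^sup>2 n / (2 ln n)\<rfloor>\<close>: long enough for the prefix error \<open>\<Delta>\<close> of the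
  weights to be at most \<open>\<epsilon> m\<close>, short enough for Hoeffding's bound to beat a union bound over
  \<open>n\<close> events.\<close>

lemma block_length_bounds:
  fixes \<epsilon> z :: real and n :: nat
  assumes eps: "0 < \<epsilon>" "\<epsilon> < 1/2" and n2: "2 \<le> n" and big: "4 \<le> \<epsilon>^3 * n / ln n"
  defines "z \<equiv> \<epsilon>^2 * n / (2 * ln n)"
  shows "4 \<le> z" "z \<le> n" "\<epsilon> * z = \<epsilon>^3 * n / ln n / 2"
proof -
  have L: "0 < ln (real n)" using n2 by simp
  show eps_z: "\<epsilon> * z = \<epsilon>^3 * n / ln n / 2"
    by (simp add: z_def power2_eq_square power3_eq_cube)
  have "2 \<le> \<epsilon> * z" using eps_z big by simp
  then have "2 / \<epsilon> \<le> z" using eps by (simp add: divide_le_eq mult.commute)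
  moreover have "4 \<le> 2 / \<epsilon>" using eps by (simp add: field_simps)
  ultimately show "4 \<le> z" by linarith
  have "1/2 - (1/2)\<^sup>2 \<le> ln (1 + (1/2::real))" by (rule ln_one_plus_pos_lower_bound) auto
  moreover have "ln (1 + (1/2::real)) \<le> ln n" using n2 by simp
  ultimately have "1/4 \<le> ln (real n)" by (simp add: power2_eq_square)
  moreover have "\<epsilon>^2 \<le> (1/2)^2" using eps by (intro power_mono) auto
  ultimately have "\<epsilon>^2 \<le> 2 * ln n" by (simp add: power2_eq_square)
  then have "\<epsilon>^2 * n \<le> 2 * ln n * n" by (rule mult_right_mono) simp
  then show "z \<le> n" unfolding z_def using L by (simp add: divide_le_eq mult.commute)
qed

lemma block_length_choice:
  fixes \<epsilon> :: real and n :: nat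
  assumes eps: "0 < \<epsilon>" "\<epsilon> < 1/2" and n2: "2 \<le> n" and big: "4 \<le> \<epsilon>^3 * n / ln n"
    and D: "real D < \<epsilon>^4 / 100 * (n / ln n)"
  defines "m \<equiv> nat \<lfloor>\<epsilon>^2 * n / (2 * ln n)\<rfloor>"
  shows "1 \<le> m" "m \<le> n" "real D + 1 \<le> \<epsilon> * m" "real n * exp (-2 * \<epsilon>^2 * n / (3 * real m)) < 1"
proof -
  define z where "z = \<epsilon>^2 * n / (2 * ln n)"
  note z = block_length_bounds[OF eps n2 big, folded z_def]
  have m: "real m \<le> z" "z - 1 < real m"
    using z(1) by (simp_all add: m_def z_def of_int_floor_le)
  show "1 \<le> m" "m \<le> n" using m z by linarith+
  define X where "X = \<epsilon>^3 * n / ln n"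
  have "real D < \<epsilon> * X / 100"
    using D by (simp add: X_def power_numeral_reduce field_simps)
  moreover have "\<epsilon> * X \<le> 1/2 * X"
    using eps big by (intro mult_right_mono) (auto simp: X_def)
  moreover have "\<epsilon> * z - \<epsilon> < \<epsilon> * m"
    using mult_strict_left_mono[OF m(2) eps(1)] by (simp add: right_diff_distrib)
  ultimately show "real D + 1 \<le> \<epsilon> * m"
    using z(3) big eps unfolding X_def[symmetric] by linarith
  have L: "0 < ln (real n)" using n2 by simp
  have "ln n < 4 / 3 * ln n" using L by simp
  also have "4 / 3 * ln n = 2 * \<epsilon>^2 * n / (3 * z)"
    using L eps n2 by (simp add: z_def field_simps)
  also have "\<dots> \<le> 2 * \<epsilon>^2 * n / (3 * real m)"
    using m \<open>1 \<le> m\<close> by (intro divide_left_mono) auto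
  finally have "exp (-2 * \<epsilon>^2 * n / (3 * real m)) < exp (- ln n)" by simp
  also have "exp (- ln n) = 1 / n" using n2 by (simp add: exp_minus inverse_eq_divide)
  finally have "exp (-2 * \<epsilon>^2 * n / (3 * real m)) < 1 / n" .
  then show "real n * exp (-2 * \<epsilon>^2 * n / (3 * real m)) < 1" using n2 by (simp add: field_simps)
qed

section \<open>Distributing the centres\<close>

lemma exists_light_permutation:
  fixes \<epsilon> :: real and w :: "nat \<Rightarrow> nat"
  assumes eps: "0 < \<epsilon>" "\<epsilon> < 1/2" and n2: "2 \<le> n" and big: "4 \<le> \<epsilon>^3 * n / ln n"
    and D: "real D < \<epsilon>^4 / 100 * (n / ln n)"
    and w: "\<forall>k\<le>n. \<bar>real (\<Sum>i<k. w i) - real k\<bar> \<le> real D + 1" "(\<Sum>i<n. w i) = n"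
    and F: "finite F" "card F \<le> n" "\<forall>U\<in>F. U \<subseteq> {..<n} \<and> real (card U) \<le> (1/2 - \<epsilon>) * n"
  shows "\<exists>\<pi>. bij_betw \<pi> {..<n} {..<n}
           \<and> (\<forall>U\<in>F. (\<Sum>i<n. if \<pi> i \<in> U then real (w i) else 0) \<le> (1/2 + \<epsilon>) * n)"
proof -
  define m where "m = nat \<lfloor>\<epsilon>^2 * n / (2 * ln n)\<rfloor>"
  note m = block_length_choice[OF eps n2 big D, folded m_def]
  interpret near_uniform_weights n m w "real D + 1" \<epsilon>
    using m eps w by unfold_locales auto
  obtain k where "\<forall>U\<in>F. rotated_weight k U \<le> (1/2 + \<epsilon>) * n"
    using exists_light_rotation[OF F m(4)] by blast
  then show ?thesis
    using bij_betw_block_rotation[OF m(1,2)] unfolding rotated_weight_def by blast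
qed

lemma card_nth_preimage:
  assumes "distinct as" "length as = n" "U \<subseteq> set as"
  shows "card {j\<in>{..<n}. as ! j \<in> U} = card U"
proof -
  have bij: "bij_betw (nth as) {..<n} (set as)"
    using assms(1,2) by (simp add: bij_betw_nth lessThan_atLeast0)
  then have "inj_on (nth as) {j\<in>{..<n}. as ! j \<in> U}" by (auto simp: bij_betw_def inj_on_def)
  then have "card (nth as ` {j\<in>{..<n}. as ! j \<in> U}) = card {j\<in>{..<n}. as ! j \<in> U}"
    by (rule card_image)
  moreover have "nth as ` {j\<in>{..<n}. as ! j \<in> U} = U" using bij assms(3) by (auto simp: bij_betw_def)
  ultimately show ?thesis by simp
qed

lemma exists_light_enumeration:
  fixes \<epsilon> :: real and d :: "'a \<Rightarrow> nat"
  assumes eps: "0 < \<epsilon>" "\<epsilon> < 1/2" and n2: "2 \<le> n" and big: "4 \<le> \<epsilon>^3 * n / ln n"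
    and S: "finite S" "card S = n" "sum d S = n" "\<forall>s\<in>S. real (d s) < \<epsilon>^4 / 100 * (n / ln n)"
    and F: "finite F" "card F \<le> n" "\<forall>U\<in>F. U \<subseteq> {..<n} \<and> real (card U) \<le> (1/2 - \<epsilon>) * n"
  obtains xs \<pi> where "distinct xs" "set xs = S" "length xs = n" "bij_betw \<pi> {..<n} {..<n}"
    "\<forall>U\<in>F. (\<Sum>i<n. if \<pi> i \<in> U then real (d (xs ! i)) else 0) \<le> (1/2 + \<epsilon>) * n"
proof -
  define D where "D = Max (d ` S)"
  have "S \<noteq> {}" using S(2) n2 by auto
  then have "D \<in> d ` S" using S(1) by (simp add: D_def)
  then have D: "\<forall>s\<in>S. d s \<le> D" "real D < \<epsilon>^4 / 100 * (n / ln n)"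
    using S(1,4) by (auto simp: D_def)
  obtain xs where xs: "distinct xs" "set xs = S" "length xs = n"
    "\<forall>k\<le>n. \<bar>real (\<Sum>i<k. d (xs ! i)) - real k\<bar> \<le> real D + 1"
    using exists_balanced_enumeration[OF S(1-3) D(1)] by blast
  have "bij_betw (nth xs) {..<n} S" using xs by (simp add: bij_betw_nth lessThan_atLeast0)
  then have "(\<Sum>i<n. d (xs ! i)) = n" using sum.reindex_bij_betw[of _ _ _ d] S(3) by metis
  then obtain \<pi> where "bij_betw \<pi> {..<n} {..<n}"
    "\<forall>U\<in>F. (\<Sum>i<n. if \<pi> i \<in> U then real (d (xs ! i)) else 0) \<le> (1/2 + \<epsilon>) * n"
    using exists_light_permutation[OF eps n2 big D(2) xs(4) _ F] by blast
  then show ?thesis by (rule that[OF xs(1-3)])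
qed

lemma exists_centre_bijection:
  fixes \<epsilon> :: real and d :: "'a \<Rightarrow> nat" and A :: "'b set"
  assumes eps: "0 < \<epsilon>" "\<epsilon> < 1/2" and n2: "2 \<le> n" and big: "4 \<le> \<epsilon>^3 * n / ln n"
    and S: "finite S" "card S = n" "sum d S = n" "\<forall>s\<in>S. real (d s) < \<epsilon>^4 / 100 * (n / ln n)"
    and A: "finite A" "card A = n"
    and F: "finite F" "card F \<le> n" "\<forall>U\<in>F. U \<subseteq> A \<and> real (card U) \<le> (1/2 - \<epsilon>) * n"
  shows "\<exists>f. bij_betw f S A \<and> (\<forall>U\<in>F. real (sum d {s\<in>S. f s \<in> U}) \<le> (1/2 + \<epsilon>) * n)"
proof -
  obtain as where as: "distinct as" "set as = A" using finite_distinct_list[OF A(1)] by blast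
  have len_as: "length as = n" using distinct_card[OF as(1)] as(2) A(2) by simp
  define V where "V U = {j\<in>{..<n}. as ! j \<in> U}" for U
  have "finite (V ` F)" "card (V ` F) \<le> n"
    "\<forall>U\<in>V ` F. U \<subseteq> {..<n} \<and> real (card U) \<le> (1/2 - \<epsilon>) * n"
    using F card_nth_preimage[OF as(1) len_as] as(2) card_image_le[OF F(1), of V] by (auto simp: V_def)
  then obtain xs \<pi> where xs: "distinct xs" "set xs = S" "length xs = n"
    and \<pi>: "bij_betw \<pi> {..<n} {..<n}"
      "\<forall>U\<in>V ` F. (\<Sum>i<n. if \<pi> i \<in> U then real (d (xs ! i)) else 0) \<le> (1/2 + \<epsilon>) * n"
    using exists_light_enumeration[OF eps n2 big S] by blast
  have bij_xs: "bij_betw (nth xs) {..<n} S" and bij_as: "bij_betw (nth as) {..<n} A"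
    using xs as len_as by (simp_all add: bij_betw_nth lessThan_atLeast0)
  define f where "f = nth as \<circ> \<pi> \<circ> inv_into {..<n} (nth xs)"
  have f: "bij_betw f S A"
    unfolding f_def using bij_betw_inv_into[OF bij_xs] \<pi>(1) bij_as by (auto intro: bij_betw_trans)
  have "real (sum d {s\<in>S. f s \<in> U}) \<le> (1/2 + \<epsilon>) * n" if "U \<in> F" for U
  proof -
    have "real (sum d {s\<in>S. f s \<in> U}) = (\<Sum>s\<in>S. if f s \<in> U then real (d s) else 0)"
      using S(1) by (auto simp: sum.inter_filter of_nat_sum intro!: sum.cong)
    also have "\<dots> = (\<Sum>i<n. if f (xs ! i) \<in> U then real (d (xs ! i)) else 0)"
      using sum.reindex_bij_betw[OF bij_xs, of "\<lambda>s. if f s \<in> U then real (d s) else 0"] by simp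
    also have "\<dots> = (\<Sum>i<n. if \<pi> i \<in> V U then real (d (xs ! i)) else 0)"
      using bij_xs \<pi>(1) by (intro sum.cong refl) (auto simp: f_def V_def bij_betw_def inv_into_f_f)
    also have "\<dots> \<le> (1/2 + \<epsilon>) * n" using \<pi>(2) that by blast
    finally show ?thesis .
  qed
  then show ?thesis using f by blast
qed

section \<open>Embedding stars\<close>

lemma star_forest_centres:
  assumes H: "bip_graph S T EH" and leaves: "\<forall>y\<in>T. degR EH y = 1"
  obtains c where "\<forall>t\<in>T. c t \<in> S" "\<And>s t. (s, t) \<in> EH \<longleftrightarrow> t \<in> T \<and> s = c t"
proof -
  have unique: "\<exists>!s. (s, t) \<in> EH" if "t \<in> T" for t
  proof -
    have "card {s. (s, t) \<in> EH} = 1" using leaves that by (simp add: degR_def)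
    then obtain s where "{s. (s, t) \<in> EH} = {s}" by (rule card_1_singletonE)
    then show ?thesis by (metis mem_Collect_eq singletonD singletonI)
  qed
  define c where "c t = (THE s. (s, t) \<in> EH)" for t
  have "(s, t) \<in> EH \<longleftrightarrow> t \<in> T \<and> s = c t" for s t
    using H unique theI'[OF unique] the1_equality[OF unique]
    unfolding bip_graph_def c_def by blast
  moreover have "\<forall>t\<in>T. c t \<in> S"
    using H theI'[OF unique] unfolding bip_graph_def c_def by blast
  ultimately show ?thesis using that by blast
qed

lemma card_filter_eq_sum_fibres:
  assumes "finite T" "finite S" "\<forall>t\<in>T. c t \<in> S"
  shows "card {t\<in>T. P (c t)} = (\<Sum>s\<in>{s\<in>S. P s}. card {t\<in>T. c t = s})"
proof -
  have "(\<Sum>s\<in>{s\<in>S. P s}. card {t\<in>T. c t = s})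
      = (\<Sum>s\<in>{s\<in>S. P s}. \<Sum>t\<in>{t\<in>{t\<in>T. P (c t)}. c t = s}. 1)"
    by (intro sum.cong refl) (auto intro: arg_cong[where f = card])
  also have "\<dots> = card {t\<in>T. P (c t)}"
    using assms by (subst sum.group) auto
  finally show ?thesis by simp
qed

lemma bip_embeds_if_leaves_spread:
  fixes W :: real
  assumes G: "bip_graph A B EG" and T: "finite T" "card T = card B"
    and EH: "\<And>s t. (s, t) \<in> EH \<longleftrightarrow> t \<in> T \<and> s = c t" and c: "\<forall>t\<in>T. c t \<in> S"
    and f: "bij_betw f S A"
    and deg: "\<forall>x\<in>A. W < real (degL EG x)"
    and spread: "\<forall>b\<in>B. real (card {t\<in>T. (f (c t), b) \<notin> EG}) \<le> W"
  shows "bip_embeds S T EH A B EG"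
proof -
  define R where "R t = {b\<in>B. (f (c t), b) \<in> EG}" for t
  have finB: "finite B" and EG: "EG \<subseteq> A \<times> B" using G by (auto simp: bip_graph_def)
  have deg_R: "degL EG (f (c t)) = card (R t)" for t
    using EG by (auto simp: R_def degL_def intro!: arg_cong[where f = card])
  have fA: "f (c t) \<in> A" if "t \<in> T" for t using f c that by (auto simp: bij_betw_def)
  have "hall_condition T R"
  proof (rule hall_condition_if_spread[OF T finB])
    show "\<forall>t\<in>T. R t \<subseteq> B" by (auto simp: R_def)
    show "\<forall>t\<in>T. W < real (card (R t))" using deg fA by (simp flip: deg_R)
    show "\<forall>b\<in>B. real (card {t\<in>T. b \<notin> R t}) \<le> W" using spread by (simp add: R_def)
  qed
  then obtain h where h: "inj_on h T" "\<forall>t\<in>T. h t \<in> R t" using hall_marriage T(1) by blast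
  have "h ` T = B"
    using h T finB by (intro card_subset_eq) (auto simp: R_def card_image)
  then have "bij_betw h T B" using h(1) by (simp add: bij_betw_def)
  moreover have "\<forall>(s, t)\<in>EH. (f s, h t) \<in> EG" using h(2) EH by (auto simp: R_def)
  ultimately show ?thesis using f unfolding bip_embeds_def by blast
qed

lemma card_non_neighbours_le:
  fixes \<epsilon> :: real
  assumes "bip_graph A B EG" "card A = n" "(1/2 + \<epsilon>) * n < real (degR EG b)"
  shows "real (card {a\<in>A. (a, b) \<notin> EG}) \<le> (1/2 - \<epsilon>) * n"
proof -
  have fin: "finite A" and EG: "EG \<subseteq> A \<times> B" using assms(1) by (auto simp: bip_graph_def)
  have "{a. (a, b) \<in> EG} = {a\<in>A. (a, b) \<in> EG}" using EG by blast
  then have "degR EG b = card {a\<in>A. (a, b) \<in> EG}" by (simp add: degR_def)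
  moreover have "card {a\<in>A. (a, b) \<notin> EG} + card {a\<in>A. (a, b) \<in> EG} = card A"
    using fin by (subst card_Un_disjoint[symmetric]) (auto intro: arg_cong[where f = card])
  ultimately have "real (card {a\<in>A. (a, b) \<notin> EG}) + real (degR EG b) = n"
    using assms(2) by (simp flip: of_nat_add)
  moreover have "(1/2 - \<epsilon>) * n = n - (1/2 + \<epsilon>) * n" by (simp add: algebra_simps)
  ultimately show ?thesis using assms(3) by linarith
qed

lemma bip_embeds_star_forest:
  fixes \<epsilon> :: real and n :: nat
  assumes eps: "0 < \<epsilon>" "\<epsilon> < 1/2" and n2: "2 \<le> n" and big: "4 \<le> \<epsilon>^3 * n / ln n"
    and G: "bip_graph A B EG" and H: "bip_graph S T EH"
    and cards: "card A = n" "card B = n" "card S = n" "card T = n"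
    and deg_A: "\<forall>x\<in>A. real (degL EG x) > (1/2 + \<epsilon>) * n"
    and deg_B: "\<forall>y\<in>B. real (degR EG y) > (1/2 + \<epsilon>) * n"
    and deg_S: "\<forall>x\<in>S. real (degL EH x) < \<epsilon>^4 / 100 * (n / ln n)"
    and deg_T: "\<forall>y\<in>T. degR EH y = 1"
  shows "bip_embeds S T EH A B EG"
proof -
  have fin: "finite A" "finite B" "finite S" "finite T"
    using G H by (auto simp: bip_graph_def)
  obtain c where c: "\<forall>t\<in>T. c t \<in> S" and EH: "\<And>s t. (s, t) \<in> EH \<longleftrightarrow> t \<in> T \<and> s = c t"
    using star_forest_centres[OF H deg_T] by blast
  define d where "d s = card {t\<in>T. c t = s}" for s
  have sum_d: "sum d S = n"
    using card_filter_eq_sum_fibres[OF fin(4,3) c, of "\<lambda>_. True"] cards(4) by (simp add: d_def)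
  have "{t. (s, t) \<in> EH} = {t\<in>T. c t = s}" for s by (auto simp: EH)
  then have "degL EH s = d s" for s by (simp add: degL_def d_def)
  then have d_small: "\<forall>s\<in>S. real (d s) < \<epsilon>^4 / 100 * (n / ln n)"
    using deg_S by simp
  define U where "U b = {a\<in>A. (a, b) \<notin> EG}" for b
  have "real (card (U b)) \<le> (1/2 - \<epsilon>) * n" if "b \<in> B" for b
    using card_non_neighbours_le[OF G cards(1)] deg_B that by (simp add: U_def)
  then have F: "finite (U ` B)" "card (U ` B) \<le> n"
    "\<forall>V\<in>U ` B. V \<subseteq> A \<and> real (card V) \<le> (1/2 - \<epsilon>) * n"
    using fin(2) cards(2) card_image_le[OF fin(2), of U] by (auto simp: U_def)
  obtain f where f: "bij_betw f S A"
    and light: "\<forall>V\<in>U ` B. real (sum d {s\<in>S. f s \<in> V}) \<le> (1/2 + \<epsilon>) * n"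
    using exists_centre_bijection[OF eps n2 big fin(3) cards(3) sum_d d_small fin(1) cards(1) F] by blast
  have "card {t\<in>T. (f (c t), b) \<notin> EG} = sum d {s\<in>S. f s \<in> U b}" for b
  proof -
    have "f (c t) \<in> A" if "t \<in> T" for t using f c that by (auto simp: bij_betw_def)
    then have "{t\<in>T. (f (c t), b) \<notin> EG} = {t\<in>T. f (c t) \<in> U b}" by (auto simp: U_def)
    then show ?thesis
      using card_filter_eq_sum_fibres[OF fin(4,3) c, of "\<lambda>s. f s \<in> U b"] by (simp add: d_def)
  qed
  then have "\<forall>b\<in>B. real (card {t\<in>T. (f (c t), b) \<notin> EG}) \<le> (1/2 + \<epsilon>) * n"
    using light by simp
  then show ?thesis
    using bip_embeds_if_leaves_spread[OF G fin(4) _ EH c f deg_A] cards by simp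
qed

theorem theorem7:
  fixes \<epsilon> :: real
  assumes "0 < \<epsilon>" and "\<epsilon> < 1/2"
  shows "\<exists>n0::nat. \<forall>n > n0. \<forall>(A::nat set) B EG S T EH.
     bip_graph A B EG \<and> bip_graph S T EH \<and>
     card A = n \<and> card B = n \<and> card S = n \<and> card T = n \<and>
     (\<forall>x\<in>A. real (degL EG x) > (1/2 + \<epsilon>) * real n) \<and>
     (\<forall>y\<in>B. real (degR EG y) > (1/2 + \<epsilon>) * real n) \<and>
     (\<forall>x\<in>S. real (degL EH x) < \<epsilon>^4 / 100 * (real n / ln (real n))) \<and>
     (\<forall>y\<in>T. degR EH y = 1)
     \<longrightarrow> bip_embeds S T EH A B EG"
proof -
  obtain N where N: "\<forall>n>N. 2 \<le> n \<and> 4 \<le> \<epsilon>^3 * real n / ln (real n)"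
    using eps_cube_n_over_ln_threshold[OF assms(1)] by blast
  show ?thesis
  proof (intro exI[of _ N] allI impI)
    fix n :: nat and A B S T :: "nat set" and EG EH :: "(nat \<times> nat) set"
    assume "N < n" and hyps: "bip_graph A B EG \<and> bip_graph S T EH \<and>
      card A = n \<and> card B = n \<and> card S = n \<and> card T = n \<and>
      (\<forall>x\<in>A. real (degL EG x) > (1/2 + \<epsilon>) * real n) \<and>
      (\<forall>y\<in>B. real (degR EG y) > (1/2 + \<epsilon>) * real n) \<and>
      (\<forall>x\<in>S. real (degL EH x) < \<epsilon>^4 / 100 * (real n / ln (real n))) \<and>
      (\<forall>y\<in>T. degR EH y = 1)"
    then have "2 \<le> n" "4 \<le> \<epsilon>^3 * real n / ln (real n)" using N by auto
    then show "bip_embeds S T EH A B EG"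
      by (rule bip_embeds_star_forest[OF assms]) (use hyps in auto)
  qed
qed

end
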